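(* If $\lambda>0$, $0<x<\pi$ and $x\lambda<\pi/2$, then \[ \int_0^{x}\frac{\sin \lambda y}{\sin y}\,dy>\mathrm{Si}(\lambda\sin x), \] where $\mathrm{Si}(t)=\int_0^t\frac{\sin u}{u}\,du$. *)

theory Defs
  imports "HOL-Analysis.Analysis"
begin

text \<open>Sine integral Si t = integral from 0 to t of sin u / u (oriented; integrand at 0 is irrelevant).\<close>
definition Si :: "real \<Rightarrow> real" where
  "Si t = (if 0 \<le> t then integral {0..t} (\<lambda>u. sin u / u) else - integral {t..0} (\<lambda>u. sin u / u))"

end

theory Submission
  imports Defs
begin

text \<open>On \<open>0 < y < x\<close> the integrand dominates \<open>sin (lam * y) / y\<close>, because \<open>0 < sin y < y\<close> and
  \<open>sin (lam * y) > 0\<close>; integrating, the left-hand side exceeds \<open>Si (lam * x)\<close> after the substitution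
  \<open>u = lam * y\<close>. Since \<open>sin u / u \<ge> 0\<close> on \<open>[0, pi]\<close>, \<open>Si\<close> is monotone there, and
  \<open>lam * sin x \<le> lam * x \<le> pi\<close> gives \<open>Si (lam * sin x) \<le> Si (lam * x)\<close>.\<close>

definition sinc :: "real \<Rightarrow> real" where
  "sinc u = (if u = 0 then 1 else sin u / u)"

lemma isCont_sinc: "isCont sinc u"
proof (cases "u = 0")
  case True
  have "((\<lambda>h. sin h / h) \<longlongrightarrow> 1) (at (0::real))"
    using DERIV_sin[of 0] by (simp add: DERIV_def)
  then have "(sinc \<longlongrightarrow> 1) (at 0)"
    by (rule Lim_transform_eventually) (auto simp: sinc_def eventually_at_filter)
  then show ?thesis
    using True by (simp add: isCont_def sinc_def)
next
  case False
  have "\<forall>\<^sub>F v in nhds u. sin v / v = sinc v"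
    using eventually_nhds_in_open[of "- {0}" u] False
    by (auto elim!: eventually_mono simp: sinc_def)
  moreover have "isCont (\<lambda>u. sin u / u) u"
    using False by (intro continuous_intros) auto
  ultimately show ?thesis
    by (simp add: isCont_cong)
qed

lemma continuous_on_sinc [continuous_intros]:
  "continuous_on S f \<Longrightarrow> continuous_on S (\<lambda>x. sinc (f x))"
  using continuous_on_compose[of S f sinc] isCont_sinc
  by (auto simp: o_def continuous_at_imp_continuous_on)

lemma sinc_pos: "0 \<le> u \<Longrightarrow> u < pi \<Longrightarrow> 0 < sinc u"
  using sin_gt_zero[of u] by (auto simp: sinc_def)

lemma sin_ratio_eq_sinc_ratio:
  "y \<noteq> 0 \<Longrightarrow> sin (lam * y) / sin y = lam * sinc (lam * y) / sinc y"
  by (cases "lam = 0") (auto simp: sinc_def field_simps)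

lemma sin_less_self:
  fixes y :: real
  assumes "0 < y"
  shows "sin y < y"
proof (cases "y < pi")
  case True
  have "sin (y/2) \<le> y/2" "0 < sin (y/2)" "cos (y/2) < 1"
    using sin_x_le_x[of "y/2"] sin_gt_zero[of "y/2"] cos_monotone_0_pi[of 0 "y/2"] assms True
    by auto
  then have "2 * sin (y/2) * cos (y/2) < 2 * sin (y/2)"
    by simp
  also have "\<dots> \<le> y"
    using \<open>sin (y/2) \<le> y/2\<close> by simp
  finally show ?thesis
    using sin_double[of "y/2"] by simp
next
  case False
  then show ?thesis
    using sin_le_one[of y] pi_gt3 by linarith
qed

lemma Si_eq_integral_sinc: "0 \<le> t \<Longrightarrow> Si t = integral {0..t} sinc"
  unfolding Si_def by (auto intro!: integral_spike[of "{0}"] simp: sinc_def split: if_splits)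

lemma Si_mono_on_0_pi:
  assumes "0 \<le> s" "s \<le> t" "t \<le> pi"
  shows "Si s \<le> Si t"
proof -
  have "integral {0..t} sinc = integral {0..s} sinc + integral {s..t} sinc"
    using assms
    by (intro Henstock_Kurzweil_Integration.integral_combine[symmetric]
        integrable_continuous_real continuous_at_imp_continuous_on ballI isCont_sinc) auto
  moreover have "0 \<le> integral {s..t} sinc"
  proof (rule integral_nonneg)
    show "sinc integrable_on {s..t}"
      by (intro integrable_continuous_real continuous_at_imp_continuous_on ballI isCont_sinc)
    show "0 \<le> sinc u" if "u \<in> {s..t}" for u
    proof (cases "u = pi")
      case False
      then show ?thesis using that assms sinc_pos[of u] by auto
    qed (simp add: sinc_def)
  qed
  ultimately show ?thesis
    using assms by (simp add: Si_eq_integral_sinc)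
qed

lemma has_integral_sinc_scaled:
  assumes "0 \<le> lam" "0 \<le> x"
  shows "((\<lambda>y. lam * sinc (lam * y)) has_integral Si (lam * x)) {0..x}"
proof -
  have "((\<lambda>y. lam *\<^sub>R sinc (lam * y)) has_integral integral {lam * 0..lam * x} sinc) {0..x}"
    using assms
    by (intro has_integral_substitution[where c = 0 and d = "lam * x"])
      (auto intro!: derivative_eq_intros continuous_intros mult_left_mono)
  then show ?thesis
    using assms by (simp add: Si_eq_integral_sinc)
qed

lemma Si_less_integral_sin_ratio:
  assumes "0 < lam" "0 < x" "x < pi" "lam * x \<le> pi"
  shows "Si (lam * x) < integral {0..x} (\<lambda>y. sin (lam * y) / sin y)"
proof -
  have sinc_nonzero: "sinc y \<noteq> 0" if "y \<in> {0..x}" for y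
    using sinc_pos[of y] that assms by auto
  have "Si (lam * x) = integral {0..x} (\<lambda>y. lam * sinc (lam * y))"
    using integral_unique[OF has_integral_sinc_scaled[of lam x]] assms
    by (simp del: integral_mult_right)
  also have "\<dots> < integral {0..x} (\<lambda>y. lam * sinc (lam * y) / sinc y)"
  proof (rule integral_less_real)
    show "continuous_on {0..x} (\<lambda>y. lam * sinc (lam * y) / sinc y)"
      using sinc_nonzero by (intro continuous_intros) auto
    fix y assume y: "y \<in> {0<..<x}"
    then have "lam * y < lam * x"
      using assms by simp
    then have "lam * y < pi"
      using assms by linarith
    then have "0 < sin (lam * y)"
      using y assms by (intro sin_gt_zero) auto
    moreover have "0 < sin y" "sin y < y"
      using y assms sin_gt_zero[of y] sin_less_self[of y] by auto
    ultimately have "sin (lam * y) / y < sin (lam * y) / sin y"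
      by (intro divide_strict_left_mono) auto
    then show "lam * sinc (lam * y) < lam * sinc (lam * y) / sinc y"
      using y assms sin_ratio_eq_sinc_ratio[of y lam] by (auto simp: sinc_def)
  qed (use assms in \<open>auto intro!: continuous_intros\<close>)
  also have "\<dots> = integral {0..x} (\<lambda>y. sin (lam * y) / sin y)"
    by (intro integral_spike[of "{0}"]) (auto simp: sin_ratio_eq_sinc_ratio)
  finally show ?thesis .
qed

theorem proposition9:
  fixes lam x :: real
  assumes "lam > 0" and "0 < x" and "x < pi" and "x * lam < pi / 2"
  shows "integral {0..x} (\<lambda>y. sin (lam * y) / sin y) > Si (lam * sin x)"
proof -
  have "0 \<le> lam * sin x" "lam * sin x \<le> lam * x"
    using assms sin_ge_zero[of x] sin_x_le_x[of x] by auto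
  then have "Si (lam * sin x) \<le> Si (lam * x)"
    using assms by (intro Si_mono_on_0_pi) (auto simp: mult.commute)
  also have "\<dots> < integral {0..x} (\<lambda>y. sin (lam * y) / sin y)"
    using assms by (intro Si_less_integral_sin_ratio) (auto simp: mult.commute)
  finally show ?thesis .
qed

end
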